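(* Let $(X_1,\|\cdot\|_1)$ and $(X_2,\|\cdot\|_2)$ be two isomorphic Banach spaces. Assume that, for each $\varepsilon>0$, $X_1$ admits a bounded linear operator which is $\varepsilon$-hypercyclic but not hypercyclic. Then, for each $\varepsilon>0$, $X_2$ admits a bounded linear operator which is $\varepsilon$-hypercyclic but not hypercyclic.
   Context: For $\varepsilon>0$, an operator $T$ on a Banach space $X$ is $\varepsilon$-hypercyclic if there is $x\in X$ such that for every $y\in X\setminus\{0\}$ there is $n\in\mathbb{N}$ with $\|T^nx-y\|\le\varepsilon\|y\|$; $T$ is hypercyclic if some orbit $\{T^nx:n\in\mathbb{N}\}$ is dense in $X$. *)

theory Defs
  imports "HOL-Analysis.Analysis"
begin

definition eps_hypercyclic :: "real \<Rightarrow> ('a::real_normed_vector \<Rightarrow> 'a) \<Rightarrow> bool" where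
  "eps_hypercyclic \<epsilon> T \<longleftrightarrow>
     (\<exists>x. \<forall>y. y \<noteq> 0 \<longrightarrow> (\<exists>n::nat. norm ((T ^^ n) x - y) \<le> \<epsilon> * norm y))"

definition hypercyclic :: "('a::real_normed_vector \<Rightarrow> 'a) \<Rightarrow> bool" where
  "hypercyclic T \<longleftrightarrow> (\<exists>x. closure (range (\<lambda>n::nat. (T ^^ n) x)) = UNIV)"

definition isomorphic_banach :: "'a::banach itself \<Rightarrow> 'b::banach itself \<Rightarrow> bool" where
  "isomorphic_banach _ _ \<longleftrightarrow>
     (\<exists>S :: 'a \<Rightarrow> 'b. bounded_linear S \<and> bij S \<and> bounded_linear (inv S))"

end

theory Submission
  imports Defs
begin

text \<open>An isomorphism \<open>S\<close> conjugates \<open>T\<close> to \<open>S \<circ> T \<circ> inv S\<close>. Dense orbits are carried back to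
  \<open>T\<close> by the continuous surjection \<open>inv S\<close>, while relative distances grow by at most the factor
  \<open>\<parallel>S\<parallel> \<parallel>S\<inverse>\<parallel>\<close>, so one starts from an \<open>\<epsilon>/(\<parallel>S\<parallel> \<parallel>S\<inverse>\<parallel>)\<close>-hypercyclic operator on the first space.\<close>

lemma funpow_semiconj:
  assumes "\<And>x. \<Phi> (U x) = T (\<Phi> x)"
  shows "\<Phi> ((U ^^ n) x) = (T ^^ n) (\<Phi> x)"
  by (induction n) (simp_all add: assms)

lemma hypercyclic_semiconj:
  assumes "hypercyclic U"
    and "\<And>x. \<Phi> (U x) = T (\<Phi> x)"
    and "continuous_on UNIV \<Phi>"
    and "surj \<Phi>"
  shows "hypercyclic T"
proof -
  obtain x where dense: "closure (range (\<lambda>n. (U ^^ n) x)) = UNIV"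
    using assms(1) unfolding hypercyclic_def by blast
  have orbit_image: "\<Phi> ` range (\<lambda>n. (U ^^ n) x) = range (\<lambda>n. (T ^^ n) (\<Phi> x))"
    using funpow_semiconj[of \<Phi> U T] assms(2) by (auto simp: image_iff)
  have "UNIV = \<Phi> ` closure (range (\<lambda>n. (U ^^ n) x))"
    using dense assms(4) by simp
  also have "\<dots> \<subseteq> closure (range (\<lambda>n. (T ^^ n) (\<Phi> x)))"
    using continuous_on_subset[OF assms(3)] closure_subset[of "range (\<lambda>n. (T ^^ n) (\<Phi> x))"]
    unfolding orbit_image[symmetric] by (intro image_closure_subset) auto
  finally show ?thesis
    unfolding hypercyclic_def by blast
qed

lemma eps_hypercyclic_semiconj:
  assumes "eps_hypercyclic \<delta> U" "0 \<le> \<delta>"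
    and "\<And>x. \<Phi> (U x) = T (\<Phi> x)"
    and "linear \<Phi>" "\<And>x. norm (\<Phi> x) \<le> K * norm x" "0 \<le> K"
    and "\<And>y. \<exists>x. \<Phi> x = y \<and> norm x \<le> K' * norm y"
  shows "eps_hypercyclic (\<delta> * K * K') T"
proof -
  obtain x where x: "\<And>y. y \<noteq> 0 \<Longrightarrow> \<exists>n. norm ((U ^^ n) x - y) \<le> \<delta> * norm y"
    using assms(1) unfolding eps_hypercyclic_def by blast
  have "\<exists>n. norm ((T ^^ n) (\<Phi> x) - y) \<le> \<delta> * K * K' * norm y" if "y \<noteq> 0" for y
  proof -
    obtain y' where y': "\<Phi> y' = y" "norm y' \<le> K' * norm y"
      using assms(7) by blast
    have "y' \<noteq> 0"
      using that y'(1) linear_0[OF assms(4)] by blast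
    then obtain n where n: "norm ((U ^^ n) x - y') \<le> \<delta> * norm y'"
      using x by blast
    have "norm ((T ^^ n) (\<Phi> x) - y) = norm (\<Phi> ((U ^^ n) x - y'))"
      using funpow_semiconj[of \<Phi> U T] assms(3) y'(1) linear_diff[OF assms(4)] by simp
    also have "\<dots> \<le> K * norm ((U ^^ n) x - y')"
      by (fact assms(5))
    also have "\<dots> \<le> K * (\<delta> * (K' * norm y))"
      using n y'(2) assms(2,6) by (intro mult_left_mono order_trans[OF n]) auto
    finally have "norm ((T ^^ n) (\<Phi> x) - y) \<le> \<delta> * K * K' * norm y"
      by (simp add: algebra_simps)
    then show ?thesis ..
  qed
  then show ?thesis
    unfolding eps_hypercyclic_def by blast
qed

theorem proposition6p1:
  assumes "isomorphic_banach TYPE('a::banach) TYPE('b::banach)"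
    and "\<forall>\<epsilon>>0. \<exists>T :: 'a \<Rightarrow> 'a. bounded_linear T \<and> eps_hypercyclic \<epsilon> T \<and> \<not> hypercyclic T"
  shows "\<forall>\<epsilon>>0. \<exists>T :: 'b \<Rightarrow> 'b. bounded_linear T \<and> eps_hypercyclic \<epsilon> T \<and> \<not> hypercyclic T"
proof (intro allI impI)
  fix \<epsilon> :: real assume "\<epsilon> > 0"
  obtain S :: "'a \<Rightarrow> 'b" where S: "bounded_linear S" "bij S" "bounded_linear (inv S)"
    using assms(1) unfolding isomorphic_banach_def by blast
  obtain K K' where K: "K > 0" "\<And>x. norm (S x) \<le> norm x * K"
    and K': "K' > 0" "\<And>y. norm (inv S y) \<le> norm y * K'"
    using bounded_linear.pos_bounded[OF S(1)] bounded_linear.pos_bounded[OF S(3)] by metis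
  obtain T :: "'a \<Rightarrow> 'a" where T: "bounded_linear T" "eps_hypercyclic (\<epsilon> / (K * K')) T" "\<not> hypercyclic T"
    using assms(2) \<open>\<epsilon> > 0\<close> K(1) K'(1) by (meson divide_pos_pos mult_pos_pos)
  have S_inv: "\<And>y. S (inv S y) = y" "\<And>x. inv S (S x) = x"
    using S(2) by (simp_all add: bij_is_inj bij_is_surj surj_f_inv_f)
  have bounded_preimages: "\<exists>x. S x = y \<and> norm x \<le> K' * norm y" for y
    using S_inv(1) K'(2) by (metis mult.commute)
  let ?U = "\<lambda>y. S (T (inv S y))"
  have "bounded_linear ?U"
    using bounded_linear_compose[OF S(1) bounded_linear_compose[OF T(1) S(3)]] by (simp add: o_def)
  moreover have "eps_hypercyclic (\<epsilon> / (K * K') * K * K') ?U"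
    using T(2) S_inv K K' \<open>\<epsilon> > 0\<close> bounded_linear.linear[OF S(1)] bounded_preimages
    by (intro eps_hypercyclic_semiconj[where \<Phi> = S]) (auto simp: mult.commute)
  moreover have "\<not> hypercyclic ?U"
  proof
    assume "hypercyclic ?U"
    then have "hypercyclic T"
      using S_inv(2) linear_continuous_on[OF S(3)] bij_is_surj[OF bij_imp_bij_inv[OF S(2)]]
      by (rule hypercyclic_semiconj[where \<Phi> = "inv S"])
    with T(3) show False ..
  qed
  ultimately show "\<exists>U :: 'b \<Rightarrow> 'b. bounded_linear U \<and> eps_hypercyclic \<epsilon> U \<and> \<not> hypercyclic U"
    using K(1) K'(1) by auto
qed

end
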